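(* Under the hypotheses of Lemma 1 (finite multi-set $\mathcal X=\{X_1,\dots,X_n\}$ of real symmetric $2\times2$ matrices, $\lambda_1$ the unique largest eigenvalue of $\mathcal X$, belonging to $X_1$, with $u_1=e_1$, $v_1=e_2$), the largest eigenvalue of $\frac1m\log E_m$, where $E_m=\sum_{i=1}^n\exp(mX_i)$, converges to $\lambda_1$ as $m\to\infty$. Consequently $e_1$ is an eigenvector of $S=\lim_{m\to\infty}\frac1m\log E_m$ with eigenvalue $\lambda_1$.
   Context: $\exp$ and $\log$ denote the matrix exponential and the matrix logarithm of a symmetric positive definite matrix. Every real symmetric $2\times2$ matrix $X_i$ is written in spectral form $X_i=\lambda_i u_iu_i^{\mathsf T}+\mu_i v_iv_i^{\mathsf T}$ with $\lambda_i\ge\mu_i$, $u_i=(\cos\varphi_i,\sin\varphi_i)^{\mathsf T}$, $v_i=(-\sin\varphi_i,\cos\varphi_i)^{\mathsf T}$, $\varphi_i\in[-\pi/2,\pi/2]$. "The eigenvalues of $\mathcal X$" means the multi-set of all $2n$ numbers $\lambda_1,\mu_1,\dots,\lambda_n,\mu_n$; an eigenvalue is unique if it occurs exactly once in this multi-set. $e_1=(1,0)^{\mathsf T}$, $e_2=(0,1)^{\mathsf T}$. *)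

theory Defs
  imports "HOL-Analysis.Analysis" "HOL-Library.Multiset"
begin

fun mpow :: "real^2^2 \<Rightarrow> nat \<Rightarrow> real^2^2" where
  "mpow A 0 = mat 1"
| "mpow A (Suc k) = A ** mpow A k"

definition mexp :: "real^2^2 \<Rightarrow> real^2^2" where
  "mexp A = (\<Sum>k. (1 / fact k) *\<^sub>R mpow A k)"

definition mlog :: "real^2^2 \<Rightarrow> real^2^2" where
  "mlog A = (THE B. transpose B = B \<and> mexp B = A)"

definition lmax :: "real^2^2 \<Rightarrow> real" where
  "lmax A = Max {c. \<exists>x. x \<noteq> 0 \<and> A *v x = c *\<^sub>R x}"

definition outer :: "real^2 \<Rightarrow> real^2 \<Rightarrow> real^2^2" where
  "outer x y = (\<chi> i j. x $ i * y $ j)"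

definition uvec :: "real \<Rightarrow> real^2" where
  "uvec \<phi> = vector [cos \<phi>, sin \<phi>]"

definition vvec :: "real \<Rightarrow> real^2" where
  "vvec \<phi> = vector [- sin \<phi>, cos \<phi>]"

definition e1 :: "real^2" where "e1 = vector [1, 0]"
definition e2 :: "real^2" where "e2 = vector [0, 1]"

end

theory Submission
  imports Defs "HOL-Real_Asymp.Real_Asymp"
begin

text \<open>Every symmetric 2x2 matrix is \<alpha> u u^T + \<beta> v v^T for an orthonormal frame u,
  v = perp u, and the matrix exp and log act on \<alpha>, \<beta> alone. So E_m = \<Sum>_i exp (m X_i) has
  this form, and (1/m) log E_m has the eigenvalues (ln \<alpha>)/m, (ln \<beta>)/m on the same frame.
  Comparing quadratic forms gives exp (m \<lambda>_1) \<le> \<alpha> \<le> n exp (m \<lambda>_1), so (ln \<alpha>)/m is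
  within (ln n)/m of \<lambda>_1. By uniqueness all other eigenvalues lie below some \<theta> < \<lambda>_1, and
  exp (m \<lambda>_1) (v \<bullet> e_1)^2 \<le> \<beta> \<le> e_2 \<bullet> E_m e_2 \<le> n exp (m \<theta>): the frame aligns with
  e_1, e_2 exponentially fast, whence (1/m) log E_m e_1 \<longrightarrow> \<lambda>_1 e_1.\<close>

lemma inner_vec2: "(x::real^2) \<bullet> y = x$1 * y$1 + x$2 * y$2"
  by (simp add: inner_vec_def sum_2)

lemma outer_mult_vec: "outer u w *v x = (w \<bullet> x) *\<^sub>R u"
  by (simp add: vec_eq_iff outer_def matrix_vector_mult_def inner_vec_def sum_distrib_left mult_ac)

lemma matrix_mult_outer: "B ** outer u w = outer (B *v u) w"
  by (simp add: vec_eq_iff outer_def matrix_matrix_mult_def matrix_vector_mult_def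
      sum_distrib_left mult_ac)

lemma outer_scaleR_left: "outer (c *\<^sub>R u) w = c *\<^sub>R outer u w"
  by (simp add: vec_eq_iff outer_def)

lemma transpose_sum:
  "transpose (\<Sum>i\<in>I. M i) = (\<Sum>i\<in>I. transpose (M i :: 'a::comm_monoid_add^'n^'m))"
  by (induction I rule: infinite_finite_induct) (simp_all add: transpose_def vec_eq_iff)

lemma sum_matrix_vector_mult:
  "(\<Sum>i\<in>I. M i) *v x = (\<Sum>i\<in>I. M i *v (x :: 'a::semiring_1^'n))"
  by (induction I rule: infinite_finite_induct) (simp_all add: matrix_vector_mult_add_rdistrib)

definition perp :: "real^2 \<Rightarrow> real^2" where
  "perp w = vector [- w$2, w$1]"

lemma inner_perp_perp [simp]: "perp u \<bullet> perp u = u \<bullet> u"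
  by (simp add: perp_def inner_vec2)

lemma inner_perp_self [simp]: "u \<bullet> perp u = 0" "perp u \<bullet> u = 0"
  by (simp_all add: perp_def inner_vec2)

lemma perp_scaleR: "perp (c *\<^sub>R u) = c *\<^sub>R perp u"
  by (simp add: perp_def vec_eq_iff forall_2)

lemma perp_uvec: "perp (uvec \<phi>) = vvec \<phi>"
  by (simp add: uvec_def vvec_def perp_def vec_eq_iff forall_2)

lemma inner_uvec_self: "uvec \<phi> \<bullet> uvec \<phi> = 1"
  by (simp add: uvec_def inner_vec2 flip: power2_eq_square)

lemma outer_add_outer_perp:
  assumes "u \<bullet> u = 1" shows "outer u u + outer (perp u) (perp u) = mat 1"
  using assms by (simp add: vec_eq_iff forall_2 outer_def perp_def mat_def inner_vec2 algebra_simps)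

lemma unit_frame_expansion:
  assumes "u \<bullet> u = 1" shows "x = (u \<bullet> x) *\<^sub>R u + (perp u \<bullet> x) *\<^sub>R perp u"
proof -
  have "x = mat 1 *v x" by simp
  then show ?thesis
    by (simp add: outer_add_outer_perp[OF assms, symmetric] matrix_vector_mult_add_rdistrib outer_mult_vec)
qed

lemma unit_frame_parseval:
  assumes "u \<bullet> u = 1" shows "(u \<bullet> x)\<^sup>2 + (perp u \<bullet> x)\<^sup>2 = x \<bullet> x"
proof -
  have "x \<bullet> x = x \<bullet> ((u \<bullet> x) *\<^sub>R u + (perp u \<bullet> x) *\<^sub>R perp u)"
    using unit_frame_expansion[OF assms] by simp
  then show ?thesis by (simp add: inner_add_right inner_commute power2_eq_square)
qed

definition frame_diag :: "real \<Rightarrow> real \<Rightarrow> real^2 \<Rightarrow> real^2^2" where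
  "frame_diag a b u = a *\<^sub>R outer u u + b *\<^sub>R outer (perp u) (perp u)"

lemma frame_diag_mult_vec:
  "frame_diag a b u *v x = (a * (u \<bullet> x)) *\<^sub>R u + (b * (perp u \<bullet> x)) *\<^sub>R perp u"
  by (simp add: frame_diag_def matrix_vector_mult_add_rdistrib outer_mult_vec
      flip: scaleR_matrix_vector_assoc)

lemma frame_diag_eigen:
  assumes "u \<bullet> u = 1"
  shows "frame_diag a b u *v u = a *\<^sub>R u" "frame_diag a b u *v perp u = b *\<^sub>R perp u"
  using assms by (simp_all add: frame_diag_mult_vec)

lemma inner_frame_diag:
  assumes "u \<bullet> u = 1"
  shows "u \<bullet> (frame_diag a b u *v y) = a * (u \<bullet> y)"
    and "perp u \<bullet> (frame_diag a b u *v y) = b * (perp u \<bullet> y)"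
  using assms by (simp_all add: frame_diag_mult_vec inner_add_right)

lemma frame_diag_quadratic_form:
  "x \<bullet> (frame_diag a b u *v x) = a * (u \<bullet> x)\<^sup>2 + b * (perp u \<bullet> x)\<^sup>2"
  by (simp add: frame_diag_mult_vec inner_add_right inner_commute power2_eq_square)

lemma transpose_frame_diag: "transpose (frame_diag a b u) = frame_diag a b u"
  by (simp add: frame_diag_def vec_eq_iff transpose_def outer_def mult_ac)

lemma scaleR_frame_diag: "c *\<^sub>R frame_diag a b u = frame_diag (c * a) (c * b) u"
  by (simp add: frame_diag_def scaleR_add_right)

lemma frame_diag_eqI:
  assumes u: "u \<bullet> u = 1" and "B *v u = a *\<^sub>R u" "B *v perp u = b *\<^sub>R perp u"
  shows "B = frame_diag a b u"
proof -
  have "B = B ** mat 1" by simp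
  then show ?thesis
    by (simp add: outer_add_outer_perp[OF u, symmetric] matrix_add_ldistrib matrix_mult_outer
        assms frame_diag_def outer_scaleR_left)
qed

lemma frame_diag_mult:
  assumes u: "u \<bullet> u = 1"
  shows "frame_diag a b u ** frame_diag c d u = frame_diag (a * c) (b * d) u"
  by (rule frame_diag_eqI[OF u])
    (simp_all add: frame_diag_eigen[OF u] matrix_vector_mult_scaleR flip: matrix_vector_mul_assoc)

lemma mpow_frame_diag:
  assumes u: "u \<bullet> u = 1" shows "mpow (frame_diag a b u) k = frame_diag (a ^ k) (b ^ k) u"
proof (induction k)
  case 0
  show ?case by (simp add: frame_diag_def outer_add_outer_perp[OF u])
next
  case (Suc k)
  then show ?case by (simp add: frame_diag_mult[OF u])
qed

lemma mexp_frame_diag: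
  assumes u: "u \<bullet> u = 1" shows "mexp (frame_diag a b u) = frame_diag (exp a) (exp b) u"
proof -
  have exp_sums: "(\<lambda>k. x ^ k / fact k) sums exp x" for x :: real
    using exp_converges[of x] by (simp add: divide_inverse mult.commute)
  have "(\<lambda>k. (1 / fact k) *\<^sub>R mpow (frame_diag a b u) k) =
      (\<lambda>k. (a ^ k / fact k) *\<^sub>R outer u u + (b ^ k / fact k) *\<^sub>R outer (perp u) (perp u))"
    unfolding mpow_frame_diag[OF u] by (simp add: frame_diag_def scaleR_add_right)
  moreover have "\<dots> sums frame_diag (exp a) (exp b) u"
    unfolding frame_diag_def by (intro sums_add sums_scaleR_left exp_sums)
  ultimately show ?thesis by (simp add: mexp_def sums_iff)
qed

lemma lmax_frame_diag:
  assumes u: "u \<bullet> u = 1" shows "lmax (frame_diag a b u) = max a b"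
proof -
  have "{c. \<exists>x. x \<noteq> 0 \<and> frame_diag a b u *v x = c *\<^sub>R x} = {a, b}"
  proof (intro equalityI subsetI)
    fix c assume "c \<in> {c. \<exists>x. x \<noteq> 0 \<and> frame_diag a b u *v x = c *\<^sub>R x}"
    then obtain x where x: "x \<noteq> 0" "frame_diag a b u *v x = c *\<^sub>R x" by blast
    have "a * (u \<bullet> x) = c * (u \<bullet> x)" "b * (perp u \<bullet> x) = c * (perp u \<bullet> x)"
      using inner_frame_diag[OF u, of a b x] x(2) by (metis inner_scaleR_right)+
    moreover have "u \<bullet> x \<noteq> 0 \<or> perp u \<bullet> x \<noteq> 0"
      using unit_frame_expansion[OF u, of x] x(1) by auto
    ultimately show "c \<in> {a, b}" by auto
  next
    fix c assume "c \<in> {a, b}"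
    moreover have "u \<noteq> 0" "perp u \<noteq> 0"
      using u by (metis inner_zero_left inner_perp_perp zero_neq_one)+
    ultimately show "c \<in> {c. \<exists>x. x \<noteq> 0 \<and> frame_diag a b u *v x = c *\<^sub>R x}"
      using frame_diag_eigen[OF u, of a b] by blast
  qed
  then show ?thesis by (simp add: lmax_def max_def)
qed

lemma frame_diag_quadratic_form_le:
  assumes u: "u \<bullet> u = 1" and y: "y \<bullet> y = 1" and "a \<le> c" "b \<le> c"
  shows "y \<bullet> (frame_diag a b u *v y) \<le> c"
proof -
  have "a * (u \<bullet> y)\<^sup>2 + b * (perp u \<bullet> y)\<^sup>2 \<le> c * ((u \<bullet> y)\<^sup>2 + (perp u \<bullet> y)\<^sup>2)"
    using assms by (simp add: distrib_left add_mono mult_right_mono)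
  then show ?thesis by (simp add: frame_diag_quadratic_form unit_frame_parseval[OF u] y)
qed

lemma frame_diag_quadratic_form_ge:
  assumes u: "u \<bullet> u = 1" and y: "y \<bullet> y = 1" and "c \<le> a" "c \<le> b"
  shows "c \<le> y \<bullet> (frame_diag a b u *v y)"
proof -
  have "c * ((u \<bullet> y)\<^sup>2 + (perp u \<bullet> y)\<^sup>2) \<le> a * (u \<bullet> y)\<^sup>2 + b * (perp u \<bullet> y)\<^sup>2"
    using assms by (simp add: distrib_left add_mono mult_right_mono)
  then show ?thesis by (simp add: frame_diag_quadratic_form unit_frame_parseval[OF u] y)
qed

lemma norm_frame_diag_mult_vec_diff:
  assumes u: "u \<bullet> u = 1" and y: "y \<bullet> y = 1"
  shows "norm (frame_diag a b u *v y - c *\<^sub>R y) \<le> \<bar>a - c\<bar> + \<bar>b - c\<bar> * \<bar>perp u \<bullet> y\<bar>"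
proof -
  have norms: "norm u = 1" "norm (perp u) = 1" "norm y = 1"
    using u y by (simp_all add: norm_eq_sqrt_inner)
  have "c *\<^sub>R y = c *\<^sub>R ((u \<bullet> y) *\<^sub>R u + (perp u \<bullet> y) *\<^sub>R perp u)"
    using unit_frame_expansion[OF u, of y] by simp
  then have "frame_diag a b u *v y - c *\<^sub>R y =
      ((a - c) * (u \<bullet> y)) *\<^sub>R u + ((b - c) * (perp u \<bullet> y)) *\<^sub>R perp u"
    by (simp add: frame_diag_mult_vec algebra_simps)
  also have "norm \<dots> \<le> \<bar>a - c\<bar> * \<bar>u \<bullet> y\<bar> + \<bar>b - c\<bar> * \<bar>perp u \<bullet> y\<bar>"
    by (rule order_trans[OF norm_triangle_ineq]) (simp add: norms abs_mult)
  also have "\<dots> \<le> \<bar>a - c\<bar> + \<bar>b - c\<bar> * \<bar>perp u \<bullet> y\<bar>"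
    using Cauchy_Schwarz_ineq2[of u y] by (simp add: norms mult_left_le)
  finally show ?thesis .
qed

lemma symmetric_eigenpair:
  fixes B :: "real^2^2"
  assumes sym: "transpose B = B"
  obtains w a b where "w \<noteq> 0" "b \<le> a" "B *v w = a *\<^sub>R w" "B *v perp w = b *\<^sub>R perp w"
proof -
  define p q r where "p = B$1$1" and "q = B$1$2" and "r = B$2$2"
  have "transpose B $1$2 = B$1$2" using sym by simp
  then have q_sym: "B$2$1 = q" by (simp add: q_def transpose_def)
  have mv: "B *v x = vector [p * x$1 + q * x$2, q * x$1 + r * x$2]" for x
    by (simp add: vec_eq_iff forall_2 matrix_vector_mult_def sum_2 p_def q_def r_def q_sym)
  define s where "s = sqrt (((p - r) / 2)\<^sup>2 + q\<^sup>2)"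
  define a b where "a = (p + r) / 2 + s" and "b = (p + r) / 2 - s"
  have "0 \<le> s" by (simp add: s_def)
  then have "b \<le> a" by (simp add: a_def b_def)
  have "s\<^sup>2 = ((p - r) / 2)\<^sup>2 + q\<^sup>2" by (simp add: s_def)
  then have char: "q * q = (a - p) * (a - r)"
    by (simp add: a_def field_simps power2_eq_square)
  have b: "b = p + r - a" by (simp add: a_def b_def)
  show thesis
  proof (cases "q = 0 \<and> r \<le> p")
    case True
    then have "s = (p - r) / 2" by (simp add: s_def)
    then have "a = p" "b = r" by (simp_all add: a_def b_def field_simps)
    with True show thesis
      by (intro that[of "vector [1, 0]"]) (simp_all add: \<open>b \<le> a\<close> mv perp_def vec_eq_iff forall_2)
  next
    case False
    txt \<open>\<open>(q, a - p)\<close> is an eigenvector for the larger root \<open>a\<close> of the characteristic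
      polynomial; it vanishes only in the diagonal case treated above.\<close>
    define w :: "real^2" where "w = vector [q, a - p]"
    have "w \<noteq> 0"
    proof
      assume "w = 0"
      then have "q = 0" "a = p" by (auto simp: w_def vec_eq_iff forall_2)
      with False \<open>0 \<le> s\<close> show False by (simp add: a_def field_simps)
    qed
    moreover have "B *v w = a *\<^sub>R w"
      using char by (simp add: mv w_def vec_eq_iff forall_2 algebra_simps)
    moreover have "B *v perp w = b *\<^sub>R perp w"
      using char by (simp add: mv w_def b perp_def vec_eq_iff forall_2 algebra_simps)
    ultimately show thesis using \<open>b \<le> a\<close> that by blast
  qed
qed

lemma symmetric_eq_frame_diag:
  fixes B :: "real^2^2"
  assumes "transpose B = B"
  obtains u a b where "u \<bullet> u = 1" "b \<le> a" "B = frame_diag a b u"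
proof -
  obtain w a b where w: "w \<noteq> 0" "b \<le> a" "B *v w = a *\<^sub>R w" "B *v perp w = b *\<^sub>R perp w"
    using symmetric_eigenpair[OF assms] .
  define u where "u = (1 / norm w) *\<^sub>R w"
  have u: "u \<bullet> u = 1" using w(1) by (simp add: u_def dot_square_norm power2_eq_square)
  have "B = frame_diag a b u"
    by (rule frame_diag_eqI[OF u]) (simp_all add: u_def perp_scaleR matrix_vector_mult_scaleR w)
  with u w(2) show thesis by (rule that)
qed

lemma frame_diag_eigen_of_exp:
  assumes u: "u \<bullet> u = 1" and y: "frame_diag (exp c) (exp d) u *v y = exp a *\<^sub>R y"
  shows "frame_diag c d u *v y = a *\<^sub>R y"
proof -
  have "exp c * (u \<bullet> y) = exp a * (u \<bullet> y)" "exp d * (perp u \<bullet> y) = exp a * (perp u \<bullet> y)"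
    using inner_frame_diag[OF u, of "exp c" "exp d" y] y by (metis inner_scaleR_right)+
  then have eq: "c * (u \<bullet> y) = a * (u \<bullet> y)" "d * (perp u \<bullet> y) = a * (perp u \<bullet> y)"
    by auto
  have "frame_diag c d u *v y = a *\<^sub>R ((u \<bullet> y) *\<^sub>R u + (perp u \<bullet> y) *\<^sub>R perp u)"
    by (simp only: frame_diag_mult_vec eq scaleR_add_right scaleR_scaleR)
  then show ?thesis using unit_frame_expansion[OF u, of y] by simp
qed

lemma symmetric_mexp_eq_frame_diag:
  assumes u: "u \<bullet> u = 1" and "transpose B = B"
    and "mexp B = frame_diag (exp a) (exp b) u"
  shows "B = frame_diag a b u"
proof -
  obtain w c d where w: "w \<bullet> w = 1" and B: "B = frame_diag c d w"
    using symmetric_eq_frame_diag[OF assms(2)] by metis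
  have "frame_diag (exp c) (exp d) w = frame_diag (exp a) (exp b) u"
    using assms(3) by (simp add: B mexp_frame_diag[OF w])
  then show ?thesis
    by (intro frame_diag_eqI[OF u])
      (simp_all add: B frame_diag_eigen_of_exp[OF w] frame_diag_eigen[OF u])
qed

lemma mlog_frame_diag:
  assumes u: "u \<bullet> u = 1" shows "mlog (frame_diag (exp a) (exp b) u) = frame_diag a b u"
  unfolding mlog_def
proof (rule the_equality)
  show "transpose (frame_diag a b u) = frame_diag a b u \<and>
      mexp (frame_diag a b u) = frame_diag (exp a) (exp b) u"
    by (simp add: transpose_frame_diag mexp_frame_diag[OF u])
qed (use symmetric_mexp_eq_frame_diag[OF u] in blast)

lemma quadratic_form_sum:
  "y \<bullet> ((\<Sum>i\<in>I. M i) *v y) = (\<Sum>i\<in>I. y \<bullet> (M i *v (y :: real^'n)))"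
  by (simp add: sum_matrix_vector_mult inner_sum_right)

lemma quadratic_form_sum_frame_diag_ge:
  fixes p q :: "'i \<Rightarrow> real"
  assumes "finite I" "j \<in> I" and "\<And>i. i \<in> I \<Longrightarrow> 0 \<le> p i \<and> 0 \<le> q i"
  shows "y \<bullet> (frame_diag (p j) (q j) (U j) *v y) \<le> y \<bullet> ((\<Sum>i\<in>I. frame_diag (p i) (q i) (U i)) *v y)"
  unfolding quadratic_form_sum using assms
  by (intro member_le_sum) (auto simp: frame_diag_quadratic_form)

text \<open>In the next two lemmas \<open>\<alpha>\<close> and \<open>\<beta>\<close> are bounded as the extreme values of the
  quadratic form on unit vectors.\<close>

lemma sum_frame_diag_top_eigenvalue_bounds:
  fixes p q :: "'i \<Rightarrow> real" and U :: "'i \<Rightarrow> real^2" and \<alpha> \<beta> :: real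
  assumes I: "finite I" "j \<in> I" and U: "\<And>i. i \<in> I \<Longrightarrow> U i \<bullet> U i = 1"
    and nonneg: "\<And>i. i \<in> I \<Longrightarrow> 0 \<le> p i \<and> 0 \<le> q i"
    and le: "\<And>i. i \<in> I \<Longrightarrow> p i \<le> p j \<and> q i \<le> p j"
    and u: "u \<bullet> u = 1" and "\<beta> \<le> \<alpha>"
    and E: "(\<Sum>i\<in>I. frame_diag (p i) (q i) (U i)) = frame_diag \<alpha> \<beta> u"
  shows "p j \<le> \<alpha>" "\<alpha> \<le> card I * p j"
proof -
  have "p j = U j \<bullet> (frame_diag (p j) (q j) (U j) *v U j)"
    using U I by (simp add: frame_diag_quadratic_form)
  also have "\<dots> \<le> U j \<bullet> (frame_diag \<alpha> \<beta> u *v U j)"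
    using quadratic_form_sum_frame_diag_ge[where p=p and q=q and U=U, OF I nonneg] by (simp add: E)
  also have "\<dots> \<le> \<alpha>" using u U I \<open>\<beta> \<le> \<alpha>\<close> by (intro frame_diag_quadratic_form_le) auto
  finally show "p j \<le> \<alpha>" .
  have "\<alpha> = u \<bullet> (frame_diag \<alpha> \<beta> u *v u)" using u by (simp add: frame_diag_quadratic_form)
  also have "\<dots> = (\<Sum>i\<in>I. u \<bullet> (frame_diag (p i) (q i) (U i) *v u))"
    by (simp flip: E add: quadratic_form_sum)
  also have "\<dots> \<le> card I * p j"
    using U u le by (intro sum_bounded_above) (simp add: frame_diag_quadratic_form_le)
  finally show "\<alpha> \<le> card I * p j" .
qed

lemma sum_frame_diag_bottom_eigenvalue_bounds:
  fixes p q :: "'i \<Rightarrow> real" and U :: "'i \<Rightarrow> real^2" and Q \<alpha> \<beta> :: real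
  assumes I: "finite I" "j \<in> I" and U: "\<And>i. i \<in> I \<Longrightarrow> U i \<bullet> U i = 1"
    and nonneg: "\<And>i. i \<in> I \<Longrightarrow> 0 \<le> p i \<and> 0 \<le> q i"
    and gap: "q j \<le> Q" "Q \<le> p j" "\<And>i. i \<in> I - {j} \<Longrightarrow> p i \<le> Q \<and> q i \<le> Q"
    and u: "u \<bullet> u = 1" and "\<beta> \<le> \<alpha>"
    and E: "(\<Sum>i\<in>I. frame_diag (p i) (q i) (U i)) = frame_diag \<alpha> \<beta> u"
  shows "q j \<le> \<beta>" "p j * (perp u \<bullet> U j)\<^sup>2 \<le> \<beta>" "\<beta> \<le> card I * Q"
proof -
  have unit: "U j \<bullet> U j = 1" "perp (U j) \<bullet> perp (U j) = 1" "perp u \<bullet> perp u = 1"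
    using U I u by simp_all
  have "perp u \<bullet> (frame_diag (p j) (q j) (U j) *v perp u) \<le> perp u \<bullet> (frame_diag \<alpha> \<beta> u *v perp u)"
    using quadratic_form_sum_frame_diag_ge[where p=p and q=q and U=U, OF I nonneg] by (simp add: E)
  then have \<beta>: "p j * (U j \<bullet> perp u)\<^sup>2 + q j * (perp (U j) \<bullet> perp u)\<^sup>2 \<le> \<beta>"
    using u by (simp add: frame_diag_quadratic_form)
  have "q j \<le> p j * (U j \<bullet> perp u)\<^sup>2 + q j * (perp (U j) \<bullet> perp u)\<^sup>2"
    using frame_diag_quadratic_form_ge[OF unit(1,3), of "q j" "p j" "q j"] gap
    by (simp add: frame_diag_quadratic_form)
  with \<beta> show "q j \<le> \<beta>" by simp
  have "0 \<le> q j * (perp (U j) \<bullet> perp u)\<^sup>2" using nonneg[OF I(2)] by simp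
  with \<beta> show "p j * (perp u \<bullet> U j)\<^sup>2 \<le> \<beta>" by (simp add: inner_commute)
  have "\<beta> \<le> perp (U j) \<bullet> (frame_diag \<alpha> \<beta> u *v perp (U j))"
    using u unit \<open>\<beta> \<le> \<alpha>\<close> by (intro frame_diag_quadratic_form_ge) auto
  also have "\<dots> = (\<Sum>i\<in>I. perp (U j) \<bullet> (frame_diag (p i) (q i) (U i) *v perp (U j)))"
    by (simp flip: E add: quadratic_form_sum)
  also have "\<dots> \<le> card I * Q"
  proof (intro sum_bounded_above)
    fix i assume "i \<in> I"
    show "perp (U j) \<bullet> (frame_diag (p i) (q i) (U i) *v perp (U j)) \<le> Q"
    proof (cases "i = j")
      case True
      then show ?thesis using gap unit by (simp add: frame_diag_quadratic_form)
    next
      case False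
      then show ?thesis
        using gap(3)[of i] \<open>i \<in> I\<close> U unit by (simp add: frame_diag_quadratic_form_le)
    qed
  qed
  finally show "\<beta> \<le> card I * Q" .
qed

lemma mlog_sum_mexp_frame_diag:
  fixes lam mu :: "'i \<Rightarrow> real" and U :: "'i \<Rightarrow> real^2" and \<theta> t :: real
  assumes I: "finite I" "j \<in> I" and U: "\<And>i. i \<in> I \<Longrightarrow> U i \<bullet> U i = 1"
    and gap: "mu j \<le> \<theta>" "\<theta> \<le> lam j" "\<And>i. i \<in> I - {j} \<Longrightarrow> lam i \<le> \<theta> \<and> mu i \<le> \<theta>"
    and t: "t > 0"
  obtains u a b where "u \<bullet> u = 1"
    and "(1 / t) *\<^sub>R mlog (\<Sum>i\<in>I. mexp (t *\<^sub>R frame_diag (lam i) (mu i) (U i))) = frame_diag a b u"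
    and "lam j \<le> a" "a \<le> lam j + ln (card I) / t" "mu j \<le> b" "b \<le> a"
    and "(perp u \<bullet> U j)\<^sup>2 \<le> card I * exp (t * (\<theta> - lam j))"
proof -
  define E where "E = (\<Sum>i\<in>I. mexp (t *\<^sub>R frame_diag (lam i) (mu i) (U i)))"
  have E_sum: "(\<Sum>i\<in>I. frame_diag (exp (t * lam i)) (exp (t * mu i)) (U i)) = E"
    unfolding E_def by (intro sum.cong) (simp_all add: scaleR_frame_diag mexp_frame_diag U)
  then have "transpose E = E" by (auto simp: transpose_sum transpose_frame_diag)
  then obtain u \<alpha> \<beta> where u: "u \<bullet> u = 1" and "\<beta> \<le> \<alpha>" and E: "E = frame_diag \<alpha> \<beta> u"
    by (rule symmetric_eq_frame_diag)
  have exp_gap: "exp (t * mu j) \<le> exp (t * \<theta>)" "exp (t * \<theta>) \<le> exp (t * lam j)"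
    "\<And>i. i \<in> I - {j} \<Longrightarrow> exp (t * lam i) \<le> exp (t * \<theta>) \<and> exp (t * mu i) \<le> exp (t * \<theta>)"
    using gap t by simp_all
  have nonneg: "\<And>i. i \<in> I \<Longrightarrow> 0 \<le> exp (t * lam i) \<and> 0 \<le> exp (t * mu i)" by simp
  have "exp (t * lam i) \<le> exp (t * lam j) \<and> exp (t * mu i) \<le> exp (t * lam j)" if "i \<in> I" for i
    using exp_gap that by (cases "i = j") (auto intro: order_trans)
  note bounds = sum_frame_diag_top_eigenvalue_bounds[OF I U nonneg this u \<open>\<beta> \<le> \<alpha>\<close> E_sum[unfolded E]]
    sum_frame_diag_bottom_eigenvalue_bounds[OF I U nonneg exp_gap u \<open>\<beta> \<le> \<alpha>\<close> E_sum[unfolded E]]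
  have pos: "0 < \<alpha>" "0 < \<beta>" using bounds(1,3) exp_gt_zero by (metis less_le_trans)+
  define a b where "a = ln \<alpha> / t" and "b = ln \<beta> / t"
  have "E = frame_diag (exp (t * a)) (exp (t * b)) u" using pos t by (simp add: E a_def b_def)
  then have "(1 / t) *\<^sub>R mlog E = frame_diag a b u"
    using t by (simp add: mlog_frame_diag[OF u] scaleR_frame_diag)
  moreover have "t * lam j \<le> ln \<alpha>" "t * mu j \<le> ln \<beta>" "ln \<beta> \<le> ln \<alpha>"
    using bounds pos \<open>\<beta> \<le> \<alpha>\<close> by (simp_all add: ln_ge_iff)
  moreover have "ln \<alpha> \<le> ln (card I) + t * lam j"
  proof -
    have "ln \<alpha> \<le> ln (card I * exp (t * lam j))"
      using bounds pos I by (simp add: card_gt_0_iff)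
    then show ?thesis using I by (auto simp: ln_mult split: if_splits)
  qed
  moreover have "(perp u \<bullet> U j)\<^sup>2 \<le> card I * exp (t * \<theta>) / exp (t * lam j)"
    using bounds(4,5) by (simp add: field_simps)
  ultimately show thesis
    using t u by (intro that[of u a b]) (simp_all add: E_def a_def b_def field_simps exp_diff right_diff_distrib)
qed

lemma scaled_mlog_sum_mexp_bounds:
  fixes lam mu :: "'i \<Rightarrow> real" and U :: "'i \<Rightarrow> real^2" and \<theta> t :: real
  assumes I: "finite I" "j \<in> I" and U: "\<And>i. i \<in> I \<Longrightarrow> U i \<bullet> U i = 1"
    and gap: "mu j \<le> \<theta>" "\<theta> \<le> lam j" "\<And>i. i \<in> I - {j} \<Longrightarrow> lam i \<le> \<theta> \<and> mu i \<le> \<theta>"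
    and t: "t > 0"
  defines "F \<equiv> (1 / t) *\<^sub>R mlog (\<Sum>i\<in>I. mexp (t *\<^sub>R frame_diag (lam i) (mu i) (U i)))"
  shows "\<bar>lmax F - lam j\<bar> \<le> ln (card I) / t"
    and "norm (F *v U j - lam j *\<^sub>R U j) \<le>
      ln (card I) / t + (lam j - mu j + ln (card I) / t) * sqrt (card I * exp (t * (\<theta> - lam j)))"
proof -
  obtain u a b where u: "u \<bullet> u = 1" and F: "F = frame_diag a b u"
    and ab: "lam j \<le> a" "a \<le> lam j + ln (card I) / t" "mu j \<le> b" "b \<le> a"
    and perp: "(perp u \<bullet> U j)\<^sup>2 \<le> card I * exp (t * (\<theta> - lam j))"
    using mlog_sum_mexp_frame_diag[where lam=lam and mu=mu and U=U, OF I U gap t]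
    unfolding F_def by blast
  show "\<bar>lmax F - lam j\<bar> \<le> ln (card I) / t"
    using ab by (simp add: F lmax_frame_diag[OF u] max_def)
  have "1 \<le> card I" using I by (auto simp: Suc_le_eq card_gt_0_iff)
  then have "0 \<le> ln (card I) / t" using t by simp
  then have "\<bar>b - lam j\<bar> \<le> lam j - mu j + ln (card I) / t" using ab gap by linarith
  moreover have "\<bar>perp u \<bullet> U j\<bar> \<le> sqrt (card I * exp (t * (\<theta> - lam j)))"
    using perp by (metis real_sqrt_abs real_sqrt_le_mono)
  ultimately have "\<bar>a - lam j\<bar> + \<bar>b - lam j\<bar> * \<bar>perp u \<bullet> U j\<bar> \<le>
      ln (card I) / t + (lam j - mu j + ln (card I) / t) * sqrt (card I * exp (t * (\<theta> - lam j)))"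
    using ab by (intro add_mono mult_mono) auto
  moreover have "norm (F *v U j - lam j *\<^sub>R U j) \<le> \<bar>a - lam j\<bar> + \<bar>b - lam j\<bar> * \<bar>perp u \<bullet> U j\<bar>"
    unfolding F using u U I by (intro norm_frame_diag_mult_vec_diff) auto
  ultimately show "norm (F *v U j - lam j *\<^sub>R U j) \<le>
      ln (card I) / t + (lam j - mu j + ln (card I) / t) * sqrt (card I * exp (t * (\<theta> - lam j)))"
    by linarith
qed

lemma LIMSEQ_norm_diff_bound:
  fixes f :: "nat \<Rightarrow> 'a::real_normed_vector"
  assumes "\<And>m. 0 < m \<Longrightarrow> norm (f m - L) \<le> g m" and "g \<longlonglongrightarrow> 0"
  shows "f \<longlonglongrightarrow> L"
proof -
  have "\<forall>\<^sub>F m in sequentially. norm (f m - L) \<le> g m"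
    using eventually_gt_at_top[of 0] by eventually_elim (rule assms(1))
  then have "(\<lambda>m. f m - L) \<longlonglongrightarrow> 0" using assms(2) by (rule Lim_null_comparison)
  then show ?thesis by (simp add: LIM_zero_iff)
qed

lemma tendsto_matrix_vector_mult_left:
  fixes A :: "'a \<Rightarrow> real^'n^'m"
  assumes "(A \<longlongrightarrow> B) F"
  shows "((\<lambda>k. A k *v x) \<longlongrightarrow> B *v x) F"
proof -
  have "bounded_linear (\<lambda>M::real^'n^'m. M *v x)"
    by (simp add: linear_conv_bounded_linear[symmetric] linearI
        matrix_vector_mult_add_rdistrib scaleR_matrix_vector_assoc)
  then show ?thesis using assms by (rule bounded_linear.tendsto)
qed

lemma scaled_mlog_sum_mexp_limits:
  fixes lam mu :: "'i \<Rightarrow> real" and U :: "'i \<Rightarrow> real^2" and \<theta> :: real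
  assumes I: "finite I" "j \<in> I" and U: "\<And>i. i \<in> I \<Longrightarrow> U i \<bullet> U i = 1"
    and gap: "mu j \<le> \<theta>" "\<theta> < lam j" "\<And>i. i \<in> I - {j} \<Longrightarrow> lam i \<le> \<theta> \<and> mu i \<le> \<theta>"
  defines "F \<equiv> \<lambda>m::nat. (1 / real m) *\<^sub>R
      mlog (\<Sum>i\<in>I. mexp (real m *\<^sub>R frame_diag (lam i) (mu i) (U i)))"
  shows "(\<lambda>m. lmax (F m)) \<longlonglongrightarrow> lam j" and "(\<lambda>m. F m *v U j) \<longlonglongrightarrow> lam j *\<^sub>R U j"
proof -
  note bounds = scaled_mlog_sum_mexp_bounds[where lam=lam and mu=mu and U=U,
      OF I U gap(1) less_imp_le[OF gap(2)] gap(3)]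
  have "0 < real (card I)" using I by (auto simp: card_gt_0_iff)
  show "(\<lambda>m. lmax (F m)) \<longlonglongrightarrow> lam j"
  proof (rule LIMSEQ_norm_diff_bound)
    show "norm (lmax (F m) - lam j) \<le> ln (card I) / real m" if "0 < m" for m
      using bounds(1)[of "real m"] that by (simp add: F_def)
    show "(\<lambda>m. ln (card I) / real m) \<longlonglongrightarrow> 0" by real_asymp
  qed
  show "(\<lambda>m. F m *v U j) \<longlonglongrightarrow> lam j *\<^sub>R U j"
  proof (rule LIMSEQ_norm_diff_bound)
    show "norm (F m *v U j - lam j *\<^sub>R U j) \<le> ln (card I) / real m +
        (lam j - mu j + ln (card I) / real m) * sqrt (card I * exp (real m * (\<theta> - lam j)))"
      if "0 < m" for m
      using bounds(2)[of "real m"] that by (simp add: F_def mult.commute)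
    show "(\<lambda>m. ln (card I) / real m +
        (lam j - mu j + ln (card I) / real m) * sqrt (card I * exp (real m * (\<theta> - lam j)))) \<longlonglongrightarrow> 0"
      using \<open>0 < real (card I)\<close> gap(2) by real_asymp
  qed
qed

lemma unique_largest_eigenvalue_gap:
  fixes lam mu :: "'i \<Rightarrow> real"
  assumes I: "finite I" "j \<in> I"
    and largest: "\<forall>x \<in># (\<Sum>i\<in>I. {#lam i, mu i#}). x \<le> lam j"
    and unique: "count (\<Sum>i\<in>I. {#lam i, mu i#}) (lam j) = 1"
  obtains \<theta> where "\<theta> < lam j" "mu j \<le> \<theta>" "\<And>i. i \<in> I - {j} \<Longrightarrow> lam i \<le> \<theta> \<and> mu i \<le> \<theta>"
proof -
  have le: "lam i \<le> lam j \<and> mu i \<le> lam j" if "i \<in> I" for i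
    using largest that I by (auto simp: set_mset_sum)
  have "count (\<Sum>i\<in>I. {#lam i, mu i#}) (lam j) = (\<Sum>i\<in>I. count {#lam i, mu i#} (lam j))"
    by (simp add: count_sum)
  also have "\<dots> = count {#lam j, mu j#} (lam j) + (\<Sum>i\<in>I - {j}. count {#lam i, mu i#} (lam j))"
    using I by (rule sum.remove)
  finally have "count {#lam j, mu j#} (lam j) + (\<Sum>i\<in>I - {j}. count {#lam i, mu i#} (lam j)) = 1"
    using unique by simp
  then have "mu j \<noteq> lam j" "\<And>i. i \<in> I - {j} \<Longrightarrow> count {#lam i, mu i#} (lam j) = 0"
    using I by auto
  then have strict: "mu j < lam j" "\<And>i. i \<in> I - {j} \<Longrightarrow> lam i < lam j \<and> mu i < lam j"
    using le I by (force split: if_splits)+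
  define A where "A = insert (mu j) (lam ` (I - {j}) \<union> mu ` (I - {j}))"
  have "finite A" "\<forall>x\<in>A. x < lam j" using I strict by (auto simp: A_def)
  then show thesis by (intro that[of "Max A"]) (auto simp: A_def)
qed

theorem lemma2:
  fixes n :: nat and X :: "nat \<Rightarrow> real^2^2" and lam mu phi :: "nat \<Rightarrow> real"
  assumes n: "n \<ge> 1"
    and spec: "\<And>i. i \<in> {1..n} \<Longrightarrow>
        X i = lam i *\<^sub>R outer (uvec (phi i)) (uvec (phi i))
            + mu i *\<^sub>R outer (vvec (phi i)) (vvec (phi i))"
    and ord: "\<And>i. i \<in> {1..n} \<Longrightarrow> mu i \<le> lam i"
    and phi: "\<And>i. i \<in> {1..n} \<Longrightarrow> phi i \<in> {- pi / 2 .. pi / 2}"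
    and largest: "\<forall>x \<in># (\<Sum>i\<in>{1..n}. {#lam i, mu i#}). x \<le> lam 1"
    and unique: "count (\<Sum>i\<in>{1..n}. {#lam i, mu i#}) (lam 1) = 1"
    and u1: "uvec (phi 1) = e1" and v1: "vvec (phi 1) = e2"
  shows "(\<lambda>m::nat. lmax ((1 / real m) *\<^sub>R mlog (\<Sum>i\<in>{1..n}. mexp (real m *\<^sub>R X i))))
           \<longlonglongrightarrow> lam 1 \<and>
         (\<forall>S. (\<lambda>m::nat. (1 / real m) *\<^sub>R mlog (\<Sum>i\<in>{1..n}. mexp (real m *\<^sub>R X i)))
           \<longlonglongrightarrow> S \<longrightarrow> S *v e1 = lam 1 *\<^sub>R e1)"
proof -
  define U where "U i = uvec (phi i)" for i
  have U: "U i \<bullet> U i = 1" for i by (simp add: U_def inner_uvec_self)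
  have U1: "U 1 = e1" unfolding U_def by (rule u1)
  obtain \<theta> where gap: "\<theta> < lam 1" "mu 1 \<le> \<theta>" "\<And>i. i \<in> {1..n} - {1} \<Longrightarrow> lam i \<le> \<theta> \<and> mu i \<le> \<theta>"
    using unique_largest_eigenvalue_gap[OF _ _ largest unique] n by auto
  have X: "(\<Sum>i\<in>{1..n}. mexp (real m *\<^sub>R X i)) =
      (\<Sum>i\<in>{1..n}. mexp (real m *\<^sub>R frame_diag (lam i) (mu i) (U i)))" for m :: nat
    by (simp add: spec frame_diag_def U_def perp_uvec)
  note limits = scaled_mlog_sum_mexp_limits[where I="{1..n}" and j=1 and lam=lam and mu=mu and U=U,
      OF _ _ U gap(2,1,3), unfolded U1]
  show ?thesis unfolding X
    using limits n by (auto intro: LIMSEQ_unique tendsto_matrix_vector_mult_left)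
qed

end
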